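(* Let $\lambda\neq 0$ be real, let $r\ge 1$ and $a_1,\dots,a_r\ge 1$ be integers, and let $G$ be the threshold graph with block sequence $0^{a_1}1^{a_2}0^{a_3}\cdots b_r^{a_r}$ and bags $B_1,\dots,B_r$. Let $\epsilon_{i,j}$ ($1\le i<j\le r$, $j$ even) be arbitrary nonzero reals, and define for $1\le i\le r$: $p_i=0,\ \epsilon_i=0$ if $i\equiv 1\pmod 4$; $p_i=\frac{\lambda(a_i-1)}{a_i},\ \epsilon_i=-\frac{\lambda}{a_i}$ if $i\equiv 2\pmod 4$; $p_i=\lambda,\ \epsilon_i=0$ if $i\equiv 3\pmod 4$; $p_i=\frac{\lambda}{a_i},\ \epsilon_i=\frac{\lambda}{a_i}$ if $i\equiv 0\pmod 4$. Let $M$ be the uniform weighted matrix of $G$ with these parameters. Let $T_1$ be the single-vertex-bag weighted threshold matrix on $v_1,\dots,v_r$ with vertex weights $p^{(1)}_i=0$ if $i\equiv 1,2\pmod 4$ and $p^{(1)}_i=\lambda$ if $i\equiv 0,3\pmod 4$, and edge weights $\epsilon^{(1)}_{i,j}=\epsilon_{i,j}\sqrt{a_ia_j}$ ($i<j$, $j$ even). Then, as multisets, $$\mathrm{Spec}(M)=\mathrm{Spec}(T_1)\cup\{0^{[A]},\lambda^{[B]}\},$$ where $A=\sum_{1\le i\le r,\ i\equiv 0,1 \ (\mathrm{mod}\ 4)}(a_i-1)$ and $B=\sum_{1\le i\le r,\ i\equiv 2,3\ (\mathrm{mod}\ 4)}(a_i-1)$, and $x^{[m]}$ denotes $m$ copies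 of $x$.
   Context: Threshold graph with block sequence $0^{a_1}1^{a_2}0^{a_3}1^{a_4}\cdots b_r^{a_r}$ ($a_i\ge 1$, $b_i=0$ for $i$ odd and $b_i=1$ for $i$ even): its vertex set is partitioned into bags $B_1,\dots,B_r$ with $|B_i|=a_i$ (added in this order, the vertices of $B_i$ being added as isolated vertices if $i$ is odd and as dominating vertices if $i$ is even); two distinct vertices $u\in B_i$, $v\in B_j$ with $i\le j$ are adjacent if and only if $j$ is even. Uniform weighted matrix: given reals $p_i$, $\epsilon_i$ ($\epsilon_i\ne0$ when $i$ is even) and nonzero reals $\epsilon_{i,j}$ ($i<j$, $j$ even), it is the symmetric matrix $M$ indexed by the vertices with $M_{vv}=p_i$ for $v\in B_i$; $M_{uv}=\epsilon_i$ for distinct $u,v\in B_i$ with $i$ even; $M_{uv}=\epsilon_{i,j}$ for $u\in B_i$, $v\in B_j$, $i<j$, $j$ even; and all other entries $0$. A single-vertex-bag weighted threshold matrix on $v_k,\dots,v_r$ (the case $a_i=1$ for all $i$, with indices starting at $k$) is the symmetric matrix indexed by $v_k,\dots,v_r$ with diagonal entries $p_i$ and, for $i<j$, entry $\epsilon_{i,j}\ne 0$ at $(v_i,v_j)$ if $j$ is even and $0$ if $j$ is odd. $\mathrm{Spec}$ denotes the multiset of eigenvalues, and $\cup$ of multisets adds multiplicities. *)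

theory Defs
  imports "Jordan_Normal_Form.Char_Poly" "HOL-Computational_Algebra.Polynomial"
begin

definition Spec :: "real mat \<Rightarrow> complex multiset" where
  "Spec M = proots (char_poly (map_mat complex_of_real M))"

text \<open>Bags B_1..B_r; vertices are 0,..,n-1 with n = a_1+...+a_r, bag B_i consisting
  of the consecutive vertices offs a i, ..., offs a i + a i - 1.\<close>
definition offs :: "(nat \<Rightarrow> nat) \<Rightarrow> nat \<Rightarrow> nat" where
  "offs a i = (\<Sum>j\<in>{1..<i}. a j)"

definition nverts :: "(nat \<Rightarrow> nat) \<Rightarrow> nat \<Rightarrow> nat" where
  "nverts a r = (\<Sum>j\<in>{1..r}. a j)"

definition bag :: "(nat \<Rightarrow> nat) \<Rightarrow> nat \<Rightarrow> nat" where
  "bag a v = (LEAST i. v < offs a (Suc i))"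

text \<open>Threshold graph with block sequence 0^{a_1} 1^{a_2} ... : distinct u in B_i,
  v in B_j (i <= j) are adjacent iff j is even.\<close>
definition thr_adj :: "(nat \<Rightarrow> nat) \<Rightarrow> nat \<Rightarrow> nat \<Rightarrow> bool" where
  "thr_adj a u v = (u \<noteq> v \<and> even (max (bag a u) (bag a v)))"

definition uniform_weighted_matrix ::
  "(nat \<Rightarrow> nat) \<Rightarrow> nat \<Rightarrow> (nat \<Rightarrow> real) \<Rightarrow> (nat \<Rightarrow> real) \<Rightarrow> (nat \<Rightarrow> nat \<Rightarrow> real) \<Rightarrow> real mat" where
  "uniform_weighted_matrix a r p eps epsij =
     mat (nverts a r) (nverts a r) (\<lambda>(u, v).
       let i = bag a u; j = bag a v in
       if u = v then p i
       else if \<not> thr_adj a u v then 0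
       else if i = j then eps i
       else epsij (min i j) (max i j))"

definition single_thr_matrix ::
  "nat \<Rightarrow> nat \<Rightarrow> (nat \<Rightarrow> real) \<Rightarrow> (nat \<Rightarrow> nat \<Rightarrow> real) \<Rightarrow> real mat" where
  "single_thr_matrix k r p epsij =
     mat (Suc r - k) (Suc r - k) (\<lambda>(s, t).
       let i = k + s; j = k + t in
       if i = j then p i
       else if even (max i j) then epsij (min i j) (max i j)
       else 0)"

end

theory Submission
  imports Defs
begin

text \<open>The bags form an equitable partition: the uniform weighted matrix \<open>M\<close> maps the scaled
  bag indicators \<open>1_{B_i} / sqrt a_i\<close> among themselves according to \<open>T_1\<close> (whose diagonal
  is \<open>p_i + (a_i - 1) \<epsilon>_i\<close>), and each difference \<open>e_u - e_v\<close> of two vertices of one bag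
  \<open>B_i\<close> is an eigenvector for \<open>p_i - \<epsilon>_i\<close>. These vectors form a basis, so \<open>M\<close> is similar to
  the direct sum of \<open>T_1\<close> and a diagonal matrix carrying \<open>p_i - \<epsilon>_i\<close> with multiplicity
  \<open>a_i - 1\<close>. For the given weights \<open>p_i - \<epsilon>_i\<close> is \<open>0\<close> for \<open>i = 0, 1\<close> and \<open>\<lambda>\<close> for
  \<open>i = 2, 3 (mod 4)\<close>.\<close>

lemma offs_Suc: "1 \<le> i \<Longrightarrow> offs a (Suc i) = offs a i + a i"
  unfolding offs_def by (simp add: sum.atLeastLessThan_Suc)

lemma offs_mono: "i \<le> j \<Longrightarrow> offs a i \<le> offs a j"
  unfolding offs_def by (rule sum_mono2) auto

lemma offs_0 [simp]: "offs a 0 = 0" "offs a (Suc 0) = 0" "offs a 1 = 0"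
  unfolding offs_def by auto

lemma nverts_eq_offs: "nverts a r = offs a (Suc r)"
  unfolding nverts_def offs_def by (metis atLeastLessThanSuc_atLeastAtMost)

lemma offs_add_le_offs: "1 \<le> i \<Longrightarrow> i \<le> r \<Longrightarrow> offs a i + a i \<le> offs a (Suc r)"
  using offs_Suc offs_mono[of "Suc i" "Suc r" a] by simp

lemma offs_decrement:
  assumes "\<And>i. 1 \<le> i \<Longrightarrow> i \<le> r \<Longrightarrow> a i \<ge> 1"
  shows "offs a (Suc r) = offs (\<lambda>i. a i - 1) (Suc r) + r"
  using assms
proof (induction r)
  case (Suc r)
  have IH: "offs a (Suc r) = offs (\<lambda>i. a i - 1) (Suc r) + r" using Suc by simp
  have "a (Suc r) \<ge> 1" using Suc.prems by simp
  then show ?case using IH offs_Suc[of "Suc r" a] offs_Suc[of "Suc r" "\<lambda>i. a i - 1"] by simp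
qed simp

lemma bag_eqI:
  assumes "1 \<le> i" "offs a i \<le> v" "v < offs a i + a i"
  shows "bag a v = i"
  unfolding bag_def
proof (rule Least_equality)
  show "v < offs a (Suc i)" using assms offs_Suc by simp
  fix j assume "v < offs a (Suc j)"
  then show "i \<le> j" using offs_mono[of "Suc j" i a] assms by (cases "i \<le> j") auto
qed

lemma bag_bounds:
  assumes "v < offs a (Suc r)"
  shows "1 \<le> bag a v" "bag a v \<le> r" "offs a (bag a v) \<le> v" "v < offs a (bag a v) + a (bag a v)"
proof -
  have le: "bag a v \<le> r"
    unfolding bag_def using assms by (rule Least_le[THEN order_trans]) simp
  have lt: "v < offs a (Suc (bag a v))"
    unfolding bag_def using assms by (rule LeastI)
  then have ge1: "1 \<le> bag a v" by (cases "bag a v") auto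
  then obtain j where j: "bag a v = Suc j" by (cases "bag a v") auto
  then have "\<not> v < offs a (Suc j)"
    using not_less_Least[of j "\<lambda>i. v < offs a (Suc i)"] unfolding bag_def by simp
  then show "1 \<le> bag a v" "bag a v \<le> r" "offs a (bag a v) \<le> v" "v < offs a (bag a v) + a (bag a v)"
    using ge1 le lt offs_Suc[OF ge1] j by auto
qed

lemma sum_over_bag:
  assumes "1 \<le> i" "i \<le> r"
  shows "(\<Sum>v<offs a (Suc r). if bag a v = i then f v else 0) = (\<Sum>v\<in>{offs a i..<offs a i + a i}. f v)"
proof -
  have "{v. v < offs a (Suc r) \<and> bag a v = i} = {offs a i..<offs a i + a i}"
  proof (intro equalityI subsetI)
    fix v assume "v \<in> {v. v < offs a (Suc r) \<and> bag a v = i}"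
    then show "v \<in> {offs a i..<offs a i + a i}" using bag_bounds(3,4)[of v a r] by auto
  next
    fix v assume "v \<in> {offs a i..<offs a i + a i}"
    then show "v \<in> {v. v < offs a (Suc r) \<and> bag a v = i}"
      using offs_add_le_offs[OF assms, of a] bag_eqI[OF assms(1), of a v] by auto
  qed
  then show ?thesis
    using sum.inter_filter[of "{..<offs a (Suc r)}" f "\<lambda>v. bag a v = i"] by (simp add: lessThan_def)
qed

lemma prod_over_bags: "(\<Prod>v<offs a (Suc r). g (bag a v)) = (\<Prod>i\<in>{1..r}. g i ^ a i)"
proof (induction r)
  case (Suc r)
  let ?B = "{offs a (Suc r)..<offs a (Suc r) + a (Suc r)}"
  have "(\<Prod>v<offs a (Suc (Suc r)). g (bag a v)) = (\<Prod>v<offs a (Suc r). g (bag a v)) * (\<Prod>v\<in>?B. g (bag a v))"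
    unfolding offs_Suc[of "Suc r" a, simplified]
    by (simp add: prod.atLeastLessThan_concat[symmetric] lessThan_atLeast0 del: prod.op_ivl_Suc)
  also have "(\<Prod>v\<in>?B. g (bag a v)) = g (Suc r) ^ a (Suc r)"
    using bag_eqI[of "Suc r" a] by (simp add: prod.cong[of ?B ?B _ "\<lambda>_. g (Suc r)"])
  finally show ?case using Suc by (simp add: atLeastAtMostSuc_conv mult.commute)
qed simp

lemma index_mult_mat_sum:
  assumes "A \<in> carrier_mat nr k" "B \<in> carrier_mat k nc" "i < nr" "j < nc"
  shows "(A * B) $$ (i, j) = (\<Sum>l<k. A $$ (i, l) * B $$ (l, j))"
  using assms by (simp add: scalar_prod_def atLeast0LessThan)

locale bag_block_matrix =
  fixes a :: "nat \<Rightarrow> nat" and r :: nat and s :: "nat \<Rightarrow> 'a::field_char_0"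
    and S :: "nat \<Rightarrow> nat \<Rightarrow> 'a" and d :: "nat \<Rightarrow> 'a"
  assumes bag_size_pos: "\<And>i. 1 \<le> i \<Longrightarrow> i \<le> r \<Longrightarrow> a i \<ge> 1"
    and bag_size_sqrt: "\<And>i. 1 \<le> i \<Longrightarrow> i \<le> r \<Longrightarrow> s i * s i = of_nat (a i)"
begin

abbreviation bg :: "nat \<Rightarrow> nat" where "bg \<equiv> bag a"
abbreviation a' :: "nat \<Rightarrow> nat" where "a' \<equiv> \<lambda>i. a i - 1"

definition n :: nat where "n = offs a (Suc r)"
definition m :: nat where "m = offs a' (Suc r)"

definition block_mat :: "'a mat" where
  "block_mat = mat n n (\<lambda>(u, v). S (bg u) (bg v) + (if u = v then d (bg u) else 0))"

definition quotient_mat :: "'a mat" where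
  "quotient_mat = mat r r (\<lambda>(i, j).
     S (Suc i) (Suc j) * s (Suc i) * s (Suc j) + (if i = j then d (Suc i) else 0))"

definition residual_mat :: "'a mat" where
  "residual_mat = mat m m (\<lambda>(k, l). if k = l then d (bag a' k) else 0)"

definition reduced_mat :: "'a mat" where
  "reduced_mat = four_block_mat quotient_mat (0\<^sub>m r m) (0\<^sub>m m r) residual_mat"

text \<open>The columns of \<open>basis_mat\<close> are the bag indicators scaled by \<open>1 / s i\<close>,
  followed by the differences \<open>e\<^sub>w - e\<^sub>f\<close> where \<open>w = residual_vertex t\<close> runs through the
  vertices that are not the first vertex \<open>f\<close> of their bag; \<open>basis_inv_mat\<close> is its inverse.\<close>

definition residual_vertex :: "nat \<Rightarrow> nat" where
  "residual_vertex t = (let k = t - r; b = bag a' k in offs a b + 1 + (k - offs a' b))"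

definition basis_mat :: "'a mat" where
  "basis_mat = mat n n (\<lambda>(v, t).
     if t < r then (if bg v = Suc t then inverse (s (Suc t)) else 0)
     else (if v = residual_vertex t then 1 else 0)
        - (if v = offs a (bg (residual_vertex t)) then 1 else 0))"

definition basis_inv_mat :: "'a mat" where
  "basis_inv_mat = mat n n (\<lambda>(t, v).
     if t < r then (if bg v = Suc t then inverse (s (Suc t)) else 0)
     else (if v = residual_vertex t then 1 else 0)
        - (if bg v = bg (residual_vertex t) then inverse (of_nat (a (bg (residual_vertex t)))) else 0))"

lemma n_eq: "n = r + m"
  unfolding n_def m_def using offs_decrement[of r a] bag_size_pos by simp

lemma carriers:
  "block_mat \<in> carrier_mat n n" "basis_mat \<in> carrier_mat n n" "basis_inv_mat \<in> carrier_mat n n"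
  "reduced_mat \<in> carrier_mat n n" "quotient_mat \<in> carrier_mat r r" "residual_mat \<in> carrier_mat m m"
  unfolding block_mat_def basis_mat_def basis_inv_mat_def reduced_mat_def quotient_mat_def
    residual_mat_def using n_eq by auto

lemma block_mat_index:
  "u < n \<Longrightarrow> v < n \<Longrightarrow> block_mat $$ (u, v) = S (bg u) (bg v) + (if u = v then d (bg u) else 0)"
  unfolding block_mat_def by simp

lemma quotient_mat_index:
  "i < r \<Longrightarrow> j < r \<Longrightarrow>
   quotient_mat $$ (i, j) = S (Suc i) (Suc j) * s (Suc i) * s (Suc j) + (if i = j then d (Suc i) else 0)"
  unfolding quotient_mat_def by simp

lemma reduced_mat_index:
  "t' < n \<Longrightarrow> t < n \<Longrightarrow> reduced_mat $$ (t', t) =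
     (if t' < r then (if t < r then quotient_mat $$ (t', t) else 0)
      else if t < r then 0 else if t' = t then d (bag a' (t - r)) else 0)"
  unfolding reduced_mat_def using n_eq carriers(5) by (auto simp: residual_mat_def)

lemma basis_mat_index:
  "v < n \<Longrightarrow> t < n \<Longrightarrow> basis_mat $$ (v, t) =
     (if t < r then (if bg v = Suc t then inverse (s (Suc t)) else 0)
      else (if v = residual_vertex t then 1 else 0)
         - (if v = offs a (bg (residual_vertex t)) then 1 else 0))"
  unfolding basis_mat_def by simp

lemma basis_inv_mat_index:
  "t < n \<Longrightarrow> v < n \<Longrightarrow> basis_inv_mat $$ (t, v) =
     (if t < r then (if bg v = Suc t then inverse (s (Suc t)) else 0)
      else (if v = residual_vertex t then 1 else 0)
         - (if bg v = bg (residual_vertex t) then inverse (of_nat (a (bg (residual_vertex t)))) else 0))"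
  unfolding basis_inv_mat_def by simp

lemma s_nonzero: "1 \<le> i \<Longrightarrow> i \<le> r \<Longrightarrow> s i \<noteq> 0"
  using bag_size_sqrt[of i] bag_size_pos[of i] by auto

lemma bg_bounds:
  assumes "v < n"
  shows "1 \<le> bg v" "bg v \<le> r" "offs a (bg v) \<le> v" "v < offs a (bg v) + a (bg v)"
  using bag_bounds[of v a r] assms unfolding n_def by auto

lemma bg_offs:
  assumes "1 \<le> i" "i \<le> r"
  shows "bg (offs a i) = i" "offs a i < n"
  using bag_eqI[OF assms(1), of a "offs a i"] bag_size_pos[OF assms] offs_add_le_offs[OF assms, of a]
  unfolding n_def by auto

lemma sum_bg:
  assumes "1 \<le> i" "i \<le> r"
  shows "(\<Sum>v<n. if bg v = i then c else 0) = of_nat (a i) * c"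
  using sum_over_bag[OF assms, of a "\<lambda>_. c"] unfolding n_def by simp

lemma residual_vertex_props:
  assumes "r \<le> t" "t < n"
  shows "residual_vertex t < n" "bg (residual_vertex t) = bag a' (t - r)"
    "1 \<le> bg (residual_vertex t)" "bg (residual_vertex t) \<le> r"
    "residual_vertex t \<noteq> offs a (bg (residual_vertex t))"
proof -
  define k where "k = t - r"
  define b where "b = bag a' k"
  have "k < offs a' (Suc r)" using assms n_eq unfolding k_def m_def by simp
  note k = bag_bounds[OF this]
  have b: "1 \<le> b" "b \<le> r" using k unfolding b_def by auto
  have w: "residual_vertex t = offs a b + 1 + (k - offs a' b)"
    unfolding residual_vertex_def k_def b_def Let_def by simp
  have lo: "offs a b < residual_vertex t" using w by simp
  have hi: "residual_vertex t < offs a b + a b" using w k unfolding b_def by simp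
  have bgw: "bg (residual_vertex t) = b" using bag_eqI[OF b(1), of a "residual_vertex t"] lo hi by simp
  show "bg (residual_vertex t) = bag a' (t - r)" using bgw unfolding b_def k_def .
  show "residual_vertex t \<noteq> offs a (bg (residual_vertex t))" using bgw lo by simp
  show "residual_vertex t < n" using hi offs_add_le_offs[OF b, of a] unfolding n_def by simp
  show "1 \<le> bg (residual_vertex t)" "bg (residual_vertex t) \<le> r" using bgw b by auto
qed

lemma residual_vertex_inj:
  assumes "r \<le> t" "t < n" "r \<le> t'" "t' < n" "residual_vertex t = residual_vertex t'"
  shows "t = t'"
proof -
  define b where "b = bag a' (t - r)"
  have b': "bag a' (t' - r) = b"
    using residual_vertex_props(2)[OF assms(1,2)] residual_vertex_props(2)[OF assms(3,4)] assms(5)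
    unfolding b_def by simp
  then have "t - r - offs a' b = t' - r - offs a' b"
    using assms(5) unfolding residual_vertex_def Let_def b_def by simp
  moreover have "offs a' b \<le> t - r" "offs a' b \<le> t' - r"
    using bag_bounds(3)[of "t - r" a' r] bag_bounds(3)[of "t' - r" a' r] assms n_eq b'
    unfolding m_def b_def by auto
  ultimately show ?thesis using assms by linarith
qed
lemma sum_delta_lessThan: "x < n \<Longrightarrow> (\<Sum>v<n. if v = x then c else 0) = c"
  by (simp add: sum.delta)

lemma basis_inv_quotient_row:
  assumes t: "t < r" and t': "t' < n"
  shows "(\<Sum>v<n. basis_inv_mat $$ (t, v) * basis_mat $$ (v, t')) = (if t = t' then 1 else 0)"
proof (cases "t' < r")
  case True
  have "(\<Sum>v<n. basis_inv_mat $$ (t, v) * basis_mat $$ (v, t'))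
      = (\<Sum>v<n. if bg v = Suc t then (if t = t' then inverse (s (Suc t)) * inverse (s (Suc t)) else 0) else 0)"
    using n_eq t t' True by (intro sum.cong) (auto simp: basis_inv_mat_index basis_mat_index)
  also have "\<dots> = of_nat (a (Suc t)) * (if t = t' then inverse (s (Suc t)) * inverse (s (Suc t)) else 0)"
    using t by (intro sum_bg) auto
  also have "\<dots> = (if t = t' then 1 else 0)"
    using bag_size_sqrt[of "Suc t"] s_nonzero[of "Suc t"] t by (auto simp: field_simps)
  finally show ?thesis .
next
  case False
  define w where "w = residual_vertex t'"
  define f where "f = offs a (bg w)"
  have w: "w < n" "bg f = bg w" "w \<noteq> f" "f < n"
    using residual_vertex_props[of t'] bg_offs[of "bg w"] False t' unfolding w_def f_def by auto
  have "(\<Sum>v<n. basis_inv_mat $$ (t, v) * basis_mat $$ (v, t'))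
      = (\<Sum>v<n. (if v = w then (if bg w = Suc t then inverse (s (Suc t)) else 0) else 0)
              - (if v = f then (if bg f = Suc t then inverse (s (Suc t)) else 0) else 0))"
    using n_eq t t' False
    by (intro sum.cong) (auto simp: basis_inv_mat_index basis_mat_index simp flip: w_def f_def)
  also have "\<dots> = 0" unfolding sum_subtractf using sum_delta_lessThan w by simp
  finally show ?thesis using t False by simp
qed

lemma basis_inv_residual_row:
  assumes t: "r \<le> t" "t < n" and t': "t' < n"
  shows "(\<Sum>v<n. basis_inv_mat $$ (t, v) * basis_mat $$ (v, t')) = (if t = t' then 1 else 0)"
proof -
  define w where "w = residual_vertex t"
  define k where "k = bg w"
  have w: "w < n" "1 \<le> k" "k \<le> r" "w \<noteq> offs a k"
    using residual_vertex_props[OF t] unfolding w_def k_def by auto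
  show ?thesis
  proof (cases "t' < r")
    case True
    have "(\<Sum>v<n. basis_inv_mat $$ (t, v) * basis_mat $$ (v, t'))
        = (\<Sum>v<n. (if v = w then (if k = Suc t' then inverse (s (Suc t')) else 0) else 0)
                - (if bg v = Suc t' then (if k = Suc t' then inverse (of_nat (a k)) * inverse (s (Suc t')) else 0) else 0))"
      using t t' True
      by (intro sum.cong) (auto simp: basis_inv_mat_index basis_mat_index left_diff_distrib simp flip: w_def k_def)
    also have "\<dots> = (if k = Suc t' then inverse (s (Suc t')) else 0)
        - of_nat (a (Suc t')) * (if k = Suc t' then inverse (of_nat (a k)) * inverse (s (Suc t')) else 0)"
      using True by (cases "k = Suc t'") (simp_all add: sum_subtractf sum_bg w(1) sum.delta)
    also have "\<dots> = 0" using bag_size_pos[of k] w by auto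
    finally show ?thesis using t True by simp
  next
    case False
    define w' where "w' = residual_vertex t'"
    define f where "f = offs a (bg w')"
    have w': "w' < n" "bg f = bg w'" "w \<noteq> f" "f < n"
      using residual_vertex_props[of t'] bg_offs[of "bg w'"] False t' w unfolding w'_def f_def k_def
      by auto
    have "(\<Sum>v<n. basis_inv_mat $$ (t, v) * basis_mat $$ (v, t'))
        = (\<Sum>v<n. (if v = w then (if w = w' then 1 else 0) else 0) - (if v = w then (if w = f then 1 else 0) else 0)
             - (if v = w' then (if bg w' = k then inverse (of_nat (a k)) else 0) else 0)
             + (if v = f then (if bg f = k then inverse (of_nat (a k)) else 0) else 0))"
      using t t' False
      by (intro sum.cong) (auto simp: basis_inv_mat_index basis_mat_index simp flip: w_def k_def w'_def f_def)
    also have "\<dots> = (if w = w' then 1 else 0)"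
      unfolding sum.distrib sum_subtractf using sum_delta_lessThan w w' by simp
    finally show ?thesis using residual_vertex_inj[of t t'] t t' False unfolding w_def w'_def by auto
  qed
qed

lemma basis_inv_mat_mult_basis_mat: "basis_inv_mat * basis_mat = 1\<^sub>m n"
proof (rule eq_matI)
  fix t t' assume "t < dim_row (1\<^sub>m n)" "t' < dim_col (1\<^sub>m n)"
  then have t: "t < n" and t': "t' < n" by auto
  show "(basis_inv_mat * basis_mat) $$ (t, t') = 1\<^sub>m n $$ (t, t')"
    using index_mult_mat_sum[OF carriers(3,2) t t'] basis_inv_quotient_row[OF _ t'] 
      basis_inv_residual_row[OF _ t t'] t t' by (cases "t < r") auto
qed (use carriers in auto)
lemma block_mat_quotient_col:
  assumes v: "v < n" and t: "t < r"
  shows "(block_mat * basis_mat) $$ (v, t) = of_nat (a (Suc t)) * (S (bg v) (Suc t) * inverse (s (Suc t)))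
           + (if bg v = Suc t then d (bg v) * inverse (s (Suc t)) else 0)"
proof -
  have "(block_mat * basis_mat) $$ (v, t) = (\<Sum>u<n. block_mat $$ (v, u) * basis_mat $$ (u, t))"
    using index_mult_mat_sum[OF carriers(1,2) v] t n_eq by simp
  also have "\<dots> = (\<Sum>u<n. (if bg u = Suc t then S (bg v) (Suc t) * inverse (s (Suc t)) else 0)
        + (if u = v then (if bg v = Suc t then d (bg v) * inverse (s (Suc t)) else 0) else 0))"
    using v t n_eq by (intro sum.cong) (auto simp: block_mat_index basis_mat_index distrib_right)
  finally show ?thesis
    unfolding sum.distrib using sum_bg[of "Suc t"] v t by (simp add: sum.delta)
qed

lemma reduced_mat_quotient_col:
  assumes v: "v < n" and t: "t < r"
  shows "(basis_mat * reduced_mat) $$ (v, t) = inverse (s (bg v))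
           * (S (bg v) (Suc t) * s (bg v) * s (Suc t) + (if bg v = Suc t then d (bg v) else 0))"
proof -
  note bv = bg_bounds[OF v]
  have "(basis_mat * reduced_mat) $$ (v, t) = (\<Sum>u<n. basis_mat $$ (v, u) * reduced_mat $$ (u, t))"
    using index_mult_mat_sum[OF carriers(2,4) v] t n_eq by simp
  also have "\<dots> = (\<Sum>u<n. if u = bg v - 1 then inverse (s (bg v))
      * (S (bg v) (Suc t) * s (bg v) * s (Suc t) + (if bg v = Suc t then d (bg v) else 0)) else 0)"
  proof (intro sum.cong refl)
    fix u assume "u \<in> {..<n}"
    then show "basis_mat $$ (v, u) * reduced_mat $$ (u, t) = (if u = bg v - 1 then inverse (s (bg v))
      * (S (bg v) (Suc t) * s (bg v) * s (Suc t) + (if bg v = Suc t then d (bg v) else 0)) else 0)"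
      using v t bv n_eq by (cases "u = bg v - 1")
        (auto simp: basis_mat_index reduced_mat_index quotient_mat_index)
  qed
  finally show ?thesis using bv n_eq by (simp add: sum.delta)
qed

lemma block_mat_residual_col:
  assumes v: "v < n" and t: "r \<le> t" "t < n"
  shows "(block_mat * basis_mat) $$ (v, t) = basis_mat $$ (v, t) * d (bag a' (t - r))"
proof -
  define w where "w = residual_vertex t"
  define f where "f = offs a (bg w)"
  have w: "w < n" "f < n" "w \<noteq> f" "bg f = bg w" "bg w = bag a' (t - r)"
    using residual_vertex_props[OF t] bg_offs[of "bg w"] unfolding w_def f_def by auto
  have "(block_mat * basis_mat) $$ (v, t) = (\<Sum>u<n. block_mat $$ (v, u) * basis_mat $$ (u, t))"
    using index_mult_mat_sum[OF carriers(1,2) v t(2)] .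
  also have "\<dots> = (\<Sum>u<n. (if u = w then block_mat $$ (v, w) else 0) - (if u = f then block_mat $$ (v, f) else 0))"
    using v t by (intro sum.cong) (auto simp: basis_mat_index simp flip: w_def f_def)
  also have "\<dots> = block_mat $$ (v, w) - block_mat $$ (v, f)"
    unfolding sum_subtractf using w by (simp add: sum.delta)
  finally have "(block_mat * basis_mat) $$ (v, t) = block_mat $$ (v, w) - block_mat $$ (v, f)" .
  moreover have "basis_mat $$ (v, t) = (if v = w then 1 else 0) - (if v = f then 1 else 0)"
    using v t by (simp add: basis_mat_index w_def f_def)
  ultimately show ?thesis using w v by (auto simp: block_mat_index)
qed

lemma reduced_mat_residual_col:
  assumes v: "v < n" and t: "r \<le> t" "t < n"
  shows "(basis_mat * reduced_mat) $$ (v, t) = basis_mat $$ (v, t) * d (bag a' (t - r))"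
proof -
  have "(basis_mat * reduced_mat) $$ (v, t) = (\<Sum>u<n. basis_mat $$ (v, u) * reduced_mat $$ (u, t))"
    using index_mult_mat_sum[OF carriers(2,4) v t(2)] .
  also have "\<dots> = (\<Sum>u<n. if u = t then basis_mat $$ (v, t) * d (bag a' (t - r)) else 0)"
    using t by (intro sum.cong) (auto simp: reduced_mat_index)
  finally show ?thesis using t by (simp add: sum.delta)
qed

lemma block_mat_mult_basis_mat: "block_mat * basis_mat = basis_mat * reduced_mat"
proof (rule eq_matI)
  fix v t assume "v < dim_row (basis_mat * reduced_mat)" "t < dim_col (basis_mat * reduced_mat)"
  then have v: "v < n" and t: "t < n" using carriers by auto
  show "(block_mat * basis_mat) $$ (v, t) = (basis_mat * reduced_mat) $$ (v, t)"
  proof (cases "t < r")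
    case True
    have "s (Suc t) \<noteq> 0" "s (bg v) \<noteq> 0" "of_nat (a (Suc t)) = s (Suc t) * s (Suc t)"
      using s_nonzero bag_size_sqrt bg_bounds[OF v] True by auto
    then show ?thesis
      unfolding block_mat_quotient_col[OF v True] reduced_mat_quotient_col[OF v True]
      by (auto simp: field_simps)
  next
    case False
    then show ?thesis using block_mat_residual_col reduced_mat_residual_col v t by simp
  qed
qed (use carriers in auto)

lemma basis_mat_mult_basis_inv_mat: "basis_mat * basis_inv_mat = 1\<^sub>m n"
  by (rule mat_mult_left_right_inverse[OF carriers(3,2) basis_inv_mat_mult_basis_mat])

lemma similar_block_mat_reduced_mat: "similar_mat block_mat reduced_mat"
proof (rule similar_matI)
  have "block_mat = block_mat * (basis_mat * basis_inv_mat)"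
    unfolding basis_mat_mult_basis_inv_mat using carriers(1) by simp
  also have "\<dots> = basis_mat * reduced_mat * basis_inv_mat"
    using carriers by (simp add: assoc_mult_mat flip: block_mat_mult_basis_mat)
  finally show "block_mat = basis_mat * reduced_mat * basis_inv_mat" .
qed (use carriers basis_mat_mult_basis_inv_mat basis_inv_mat_mult_basis_mat in auto)

lemma char_poly_reduced_mat: "char_poly reduced_mat = char_poly quotient_mat * char_poly residual_mat"
proof -
  have "char_poly_matrix reduced_mat
      = four_block_mat (char_poly_matrix quotient_mat) (0\<^sub>m r m) (0\<^sub>m m r) (char_poly_matrix residual_mat)"
    unfolding char_poly_matrix_def reduced_mat_def
    by (rule eq_matI) (use carriers(5,6) in \<open>auto simp: one_poly_def\<close>)
  then show ?thesis
    unfolding char_poly_def using carriers(5,6)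
    by (simp add: det_four_block_mat_lower_left_zero[of _ r _ m])
qed

lemma char_poly_residual_mat: "char_poly residual_mat = (\<Prod>i\<in>{1..r}. [:- d i, 1:] ^ (a i - 1))"
proof -
  have "upper_triangular residual_mat" unfolding upper_triangular_def residual_mat_def by auto
  then have "char_poly residual_mat = (\<Prod>x\<leftarrow>diag_mat residual_mat. [:- x, 1:])"
    by (rule char_poly_upper_triangular[OF carriers(6)])
  also have "diag_mat residual_mat = map (\<lambda>k. d (bag a' k)) [0..<m]"
    unfolding diag_mat_def residual_mat_def by auto
  also have "(\<Prod>x\<leftarrow>map (\<lambda>k. d (bag a' k)) [0..<m]. [:- x, 1:]) = (\<Prod>k<m. [:- d (bag a' k), 1:])"
    by (simp add: prod.distinct_set_conv_list[symmetric] comp_def atLeast0LessThan)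
  also have "\<dots> = (\<Prod>i\<in>{1..r}. [:- d i, 1:] ^ (a i - 1))"
    unfolding m_def by (rule prod_over_bags)
  finally show ?thesis .
qed

lemma char_poly_block_mat:
  "char_poly block_mat = char_poly quotient_mat * (\<Prod>i\<in>{1..r}. [:- d i, 1:] ^ (a i - 1))"
  using char_poly_similar[OF similar_block_mat_reduced_mat] char_poly_reduced_mat char_poly_residual_mat
  by simp

end

definition thr_weight :: "(nat \<Rightarrow> real) \<Rightarrow> (nat \<Rightarrow> nat \<Rightarrow> real) \<Rightarrow> nat \<Rightarrow> nat \<Rightarrow> real" where
  "thr_weight eps epsij i j =
     (if odd (max i j) then 0 else if i = j then eps i else epsij (min i j) (max i j))"

locale uniform_weighted_threshold =
  fixes a :: "nat \<Rightarrow> nat" and r :: nat and p eps :: "nat \<Rightarrow> real"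
    and epsij :: "nat \<Rightarrow> nat \<Rightarrow> real"
  assumes bags_nonempty: "\<And>i. 1 \<le> i \<Longrightarrow> i \<le> r \<Longrightarrow> a i \<ge> 1"

sublocale uniform_weighted_threshold \<subseteq> bag_block_matrix a r
  "\<lambda>i. complex_of_real (sqrt (real (a i)))"
  "\<lambda>i j. complex_of_real (thr_weight eps epsij i j)"
  "\<lambda>i. complex_of_real (p i - thr_weight eps epsij i i)"
proof
  fix i assume "1 \<le> i" "i \<le> r"
  then show "a i \<ge> 1" by (rule bags_nonempty)
  show "complex_of_real (sqrt (real (a i))) * complex_of_real (sqrt (real (a i))) = of_nat (a i)"
    by (simp flip: of_real_mult)
qed

context uniform_weighted_threshold
begin

lemma map_uniform_weighted_matrix:
  "map_mat complex_of_real (uniform_weighted_matrix a r p eps epsij) = block_mat"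
proof (rule eq_matI)
  fix u v assume "u < dim_row block_mat" "v < dim_col block_mat"
  then have u: "u < n" and v: "v < n" using carriers(1) by auto
  then have "u < nverts a r" "v < nverts a r" by (simp_all add: nverts_eq_offs n_def)
  then show "map_mat complex_of_real (uniform_weighted_matrix a r p eps epsij) $$ (u, v) = block_mat $$ (u, v)"
    unfolding block_mat_index[OF u v]
    by (auto simp: uniform_weighted_matrix_def thr_adj_def thr_weight_def Let_def)
qed (use carriers(1) in \<open>auto simp: uniform_weighted_matrix_def nverts_eq_offs n_def\<close>)

lemma map_single_thr_matrix:
  "map_mat complex_of_real (single_thr_matrix 1 r
     (\<lambda>i. p i + (real (a i) - 1) * thr_weight eps epsij i i)
     (\<lambda>i j. epsij i j * sqrt (real (a i) * real (a j)))) = quotient_mat"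
proof (rule eq_matI)
  fix x y assume "x < dim_row quotient_mat" "y < dim_col quotient_mat"
  then have x: "x < r" and y: "y < r" using carriers(5) by auto
  have "sqrt (real (a (Suc (min x y))) * real (a (Suc (max x y))))
      = sqrt (real (a (Suc x))) * sqrt (real (a (Suc y)))"
    by (cases "x < y") (auto simp: real_sqrt_mult min_def max_def)
  with x y show "map_mat complex_of_real (single_thr_matrix 1 r
     (\<lambda>i. p i + (real (a i) - 1) * thr_weight eps epsij i i)
     (\<lambda>i j. epsij i j * sqrt (real (a i) * real (a j)))) $$ (x, y) = quotient_mat $$ (x, y)"
    unfolding quotient_mat_index[OF x y]
    by (cases "x = y") (auto simp: single_thr_matrix_def thr_weight_def algebra_simps
        simp flip: of_real_mult of_real_add of_real_diff)
qed (use carriers(5) in \<open>auto simp: single_thr_matrix_def\<close>)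

theorem Spec_uniform_weighted_matrix:
  "Spec (uniform_weighted_matrix a r p eps epsij)
     = Spec (single_thr_matrix 1 r (\<lambda>i. p i + (real (a i) - 1) * thr_weight eps epsij i i)
                                  (\<lambda>i j. epsij i j * sqrt (real (a i) * real (a j))))
       + (\<Sum>i\<in>{1..r}. replicate_mset (a i - 1) (complex_of_real (p i - thr_weight eps epsij i i)))"
proof -
  let ?D = "\<Prod>i\<in>{1..r}. [:- complex_of_real (p i - thr_weight eps epsij i i), 1:] ^ (a i - 1)"
  have "char_poly quotient_mat \<noteq> 0"
    using degree_monic_char_poly[OF carriers(5)] by auto
  moreover have "?D \<noteq> 0" by (simp add: prod_zero_iff)
  moreover have "proots ?D = (\<Sum>i\<in>{1..r}. replicate_mset (a i - 1) (complex_of_real (p i - thr_weight eps epsij i i)))"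
    by (subst proots_prod) (auto simp: proots_power)
  ultimately show ?thesis
    unfolding Spec_def map_uniform_weighted_matrix map_single_thr_matrix char_poly_block_mat
    by (simp add: proots_mult)
qed

end

lemma single_thr_matrix_cong:
  assumes "\<And>i. k \<le> i \<Longrightarrow> i \<le> r \<Longrightarrow> p i = q i"
  shows "single_thr_matrix k r p e = single_thr_matrix k r q e"
  unfolding single_thr_matrix_def using assms by (intro eq_matI) (auto simp: Let_def)

lemma sum_replicate_mset_const:
  assumes "finite I" "\<And>i. i \<in> I \<Longrightarrow> x i = c"
  shows "(\<Sum>i\<in>I. replicate_mset (k i) (x i)) = replicate_mset (\<Sum>i\<in>I. k i) c"
  using assms by (intro multiset_eqI) (simp add: count_sum)

lemma even_iff_mod_4: "even (i::nat) \<longleftrightarrow> i mod 4 = 0 \<or> i mod 4 = 2"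
  by presburger

theorem mainTheorem3:
  fixes lam :: real and r :: nat and a :: "nat \<Rightarrow> nat"
    and epsij :: "nat \<Rightarrow> nat \<Rightarrow> real"
  assumes "lam \<noteq> 0" and "r \<ge> 1"
    and "\<And>i. 1 \<le> i \<Longrightarrow> i \<le> r \<Longrightarrow> a i \<ge> 1"
    and "\<And>i j. 1 \<le> i \<Longrightarrow> i < j \<Longrightarrow> j \<le> r \<Longrightarrow> even j \<Longrightarrow> epsij i j \<noteq> 0"
  defines "p \<equiv> (\<lambda>i. if i mod 4 = 1 then 0
                     else if i mod 4 = 2 then lam * (real (a i) - 1) / real (a i)
                     else if i mod 4 = 3 then lam
                     else lam / real (a i))"
    and "eps \<equiv> (\<lambda>i. if i mod 4 = 1 then 0
                     else if i mod 4 = 2 then - lam / real (a i)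
                     else if i mod 4 = 3 then 0
                     else lam / real (a i))"
    and "p1 \<equiv> (\<lambda>i. if i mod 4 = 1 \<or> i mod 4 = 2 then 0 else lam)"
    and "epsij1 \<equiv> (\<lambda>i j. epsij i j * sqrt (real (a i) * real (a j)))"
    and "A \<equiv> (\<Sum>i\<in>{i\<in>{1..r}. i mod 4 = 0 \<or> i mod 4 = 1}. a i - 1)"
    and "B \<equiv> (\<Sum>i\<in>{i\<in>{1..r}. i mod 4 = 2 \<or> i mod 4 = 3}. a i - 1)"
  shows "Spec (uniform_weighted_matrix a r p eps epsij)
           = Spec (single_thr_matrix 1 r p1 epsij1)
             + replicate_mset A 0 + replicate_mset B (complex_of_real lam)"
proof -
  interpret uniform_weighted_threshold a r p eps epsij
    by unfold_locales (rule assms(3))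
  have a_nonzero: "real (a i) \<noteq> 0" if "i \<in> {1..r}" for i
    using assms(3) that by force
  have diag_weight: "thr_weight eps epsij i i = eps i" for i
    unfolding thr_weight_def eps_def using even_iff_mod_4[of i] by auto
  have T: "single_thr_matrix 1 r (\<lambda>i. p i + (real (a i) - 1) * eps i) epsij1
      = single_thr_matrix 1 r p1 epsij1"
    by (rule single_thr_matrix_cong) (use a_nonzero in \<open>auto simp: p_def eps_def p1_def field_simps\<close>)
  have "(\<Sum>i\<in>{1..r}. replicate_mset (a i - 1) (complex_of_real (p i - eps i)))
      = (\<Sum>i\<in>{i\<in>{1..r}. i mod 4 = 0 \<or> i mod 4 = 1}. replicate_mset (a i - 1) (complex_of_real (p i - eps i)))
      + (\<Sum>i\<in>{i\<in>{1..r}. i mod 4 = 2 \<or> i mod 4 = 3}. replicate_mset (a i - 1) (complex_of_real (p i - eps i)))"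
    by (subst sum.union_disjoint[symmetric]) (auto intro!: sum.cong)
  also have "\<dots> = replicate_mset A 0 + replicate_mset B (complex_of_real lam)"
    unfolding A_def B_def using a_nonzero
    by (intro arg_cong2[where f = "(+)"] sum_replicate_mset_const)
      (auto simp: p_def eps_def field_simps)
  finally show ?thesis
    using Spec_uniform_weighted_matrix T by (simp add: diag_weight add.assoc epsij1_def)
qed

end
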